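(* Let $k\ge2$. For all integers $n\ge1$ and $i\ge0$, $|\mathsf{Manila}_k(n,i)|=|\mathsf{Paths}_k(n,i)|$.
   Context: Fix $k\ge2$. The sets $\mathsf{Manila}_k(n,i)$ of formal words (manila folder configurations: $n$ folders each with $k-1$ compartments, $i+1$ spines visible from below) are defined recursively: (M1) $\mathsf{Manila}_k(0,-1)=\{\epsilon\}$ (the empty configuration); (M2) for $n\ge1$, $\mathsf{Manila}_k(n,0)$ consists of all bracketed tuples $(M_1,\dots,M_{k-1})$ with $M_j\in\mathsf{Manila}_k(n_j,i_j)$ for some $n_j\ge0$ and any $i_j$, where $n_1+\dots+n_{k-1}=n-1$; (M3) for $\ell>1$, $\mathsf{Manila}_k(n,\ell-1)$ consists of all concatenations $M_1M_2\cdots M_\ell$ with $M_j\in\mathsf{Manila}_k(n_j,0)$ and $n_1+\dots+n_\ell=n$. $\mathsf{Paths}_k(n,i)$ is the set of lattice paths from $((k-1)n,n)$ to $(0,0)$ using unit south steps $(0,-1)$ and unit west steps $(-1,0)$, staying in the first quadrant weakly below the line $(k-1)y=x$ (i.e. $(k-1)y\le x$ at every point), which meet the line $(k-1)y=x$ at exactly $i$ lattice points other than the two endpoints. *)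

theory Defs
  imports Main
begin

text \<open>Formal words for manila folder configurations: strings over the
alphabet of left bracket, comma and right bracket.  A tuple
(M_1,...,M_{k-1}) is the word  LP M_1 Comma M_2 ... Comma M_{k-1} RP.\<close>

datatype sym = LP | Comma | RP

fun comma_join :: "sym list list \<Rightarrow> sym list" where
  "comma_join [] = []"
| "comma_join [M] = M"
| "comma_join (M # Ms) = M @ [Comma] @ comma_join Ms"

definition tuple_word :: "sym list list \<Rightarrow> sym list" where
  "tuple_word Ms = [LP] @ comma_join Ms @ [RP]"

text \<open>manila k n i w  means  w \<in> Manila_k(n,i).  The index i is an integer
since Manila_k(0,-1) occurs.\<close>

inductive manila :: "nat \<Rightarrow> nat \<Rightarrow> int \<Rightarrow> sym list \<Rightarrow> bool" for k :: nat where
  M1: "manila k 0 (-1) []"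
| M2: "\<lbrakk> n \<ge> 1; length Ms = k - 1; length ns = k - 1; length is = k - 1;
         \<forall>j < k - 1. manila k (ns ! j) (is ! j) (Ms ! j);
         sum_list ns = n - 1 \<rbrakk>
       \<Longrightarrow> manila k n 0 (tuple_word Ms)"
| M3: "\<lbrakk> l > 1; length Ms = l; length ns = l;
         \<forall>j < l. manila k (ns ! j) 0 (Ms ! j);
         sum_list ns = n \<rbrakk>
       \<Longrightarrow> manila k n (int l - 1) (concat Ms)"

definition Manila :: "nat \<Rightarrow> nat \<Rightarrow> int \<Rightarrow> sym list set" where
  "Manila k n i = {w. manila k n i w}"

text \<open>Lattice paths: a list of unit steps, South (0,-1) or West (-1,0),
starting at ((k-1)n, n).\<close>

datatype step = South | West

definition pos :: "nat \<Rightarrow> nat \<Rightarrow> step list \<Rightarrow> int \<times> int" where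
  "pos k n q = (int ((k - 1) * n) - int (length (filter (\<lambda>s. s = West) q)),
                int n - int (length (filter (\<lambda>s. s = South) q)))"

definition Paths :: "nat \<Rightarrow> nat \<Rightarrow> nat \<Rightarrow> step list set" where
  "Paths k n i = {p.
      pos k n p = (0, 0) \<and>
      (\<forall>m \<le> length p. let (x, y) = pos k n (take m p) in
           0 \<le> x \<and> 0 \<le> y \<and> int (k - 1) * y \<le> x) \<and>
      card {pos k n (take m p) | m. 0 < m \<and> m < length p \<and>
              (let (x, y) = pos k n (take m p) in int (k - 1) * y = x)} = i}"

end

theory Submission
  imports Defs
begin

(*
  Read a left bracket as a south step and a comma or a right bracket as a west step.
  A tuple (M_1, ..., M_{k-1}) becomes South D_1 West D_2 West ... D_{k-1} West, which is
  precisely a path meeting the line (k-1)y = x only at its two ends, and a concatenation of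
  l folders becomes a path meeting that line l - 1 times in between.  Conversely, a path
  splits at its first return to the line, and a primitive path South q splits at the first
  passages of q to the levels -1, ..., -(k-1); this rebuilds a configuration by induction on
  the length.  The map is injective because the word can be read back from the path: a west
  step is a comma or a right bracket according to whether the innermost open bracket still
  owes commas.
*)

fun step_of_sym :: "sym \<Rightarrow> step" where
  "step_of_sym LP = South"
| "step_of_sym Comma = West"
| "step_of_sym RP = West"

definition path_of_word :: "sym list \<Rightarrow> step list" where
  "path_of_word = map step_of_sym"

lemma path_of_word_simps [simp]:
  "path_of_word [] = []"
  "path_of_word (a # w) = step_of_sym a # path_of_word w"
  "path_of_word (u @ v) = path_of_word u @ path_of_word v"
  "path_of_word (concat Ms) = concat (map path_of_word Ms)"
  "length (path_of_word w) = length w"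
  "path_of_word w = [] \<longleftrightarrow> w = []"
  by (simp_all add: path_of_word_def map_concat)

(* The stack cs holds, for each open bracket, the number of commas it still owes.  The equation
   for West on an empty stack is never reached when decoding a Manila word. *)
fun decode :: "nat \<Rightarrow> nat list \<Rightarrow> step list \<Rightarrow> sym list" where
  "decode k cs [] = []"
| "decode k cs (South # q) = LP # decode k ((k - 2) # cs) q"
| "decode k [] (West # q) = RP # decode k [] q"
| "decode k (0 # cs) (West # q) = RP # decode k cs q"
| "decode k (Suc c # cs) (West # q) = Comma # decode k (c # cs) q"

lemma decode_concat:
  assumes "\<forall>M\<in>set Ms. \<forall>cs q. decode k cs (path_of_word M @ q) = M @ decode k cs q"
  shows "decode k cs (path_of_word (concat Ms) @ q) = concat Ms @ decode k cs q"
  using assms by (induction Ms arbitrary: cs q) auto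

lemma decode_comma_join:
  assumes "\<forall>M\<in>set Ms. \<forall>cs q. decode k cs (path_of_word M @ q) = M @ decode k cs q"
    and "length Ms = Suc c"
  shows "decode k (c # cs) (path_of_word (comma_join Ms) @ West # q) = comma_join Ms @ RP # decode k cs q"
  using assms
proof (induction Ms arbitrary: c rule: comma_join.induct)
  case (3 M N Ns)
  then obtain c' where "c = Suc c'" by (cases c) auto
  with 3 show ?case by simp
qed simp_all

lemma decode_path_of_word:
  assumes "manila k n i w" "k \<ge> 2"
  shows "decode k cs (path_of_word w @ q) = w @ decode k cs q"
  using assms
proof (induction arbitrary: cs q rule: manila.induct)
  case M1
  then show ?case by simp
next
  case (M2 n Ms ns "is")
  then have "\<forall>M\<in>set Ms. \<forall>cs q. decode k cs (path_of_word M @ q) = M @ decode k cs q"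
    by (auto simp: in_set_conv_nth)
  moreover have "length Ms = Suc (k - 2)"
    using M2 by simp
  ultimately show ?case
    using decode_comma_join by (simp add: tuple_word_def)
next
  case (M3 l Ms ns n)
  then have "\<forall>M\<in>set Ms. \<forall>cs q. decode k cs (path_of_word M @ q) = M @ decode k cs q"
    by (auto simp: in_set_conv_nth)
  then show ?case
    by (rule decode_concat)
qed

lemma inj_on_path_of_word_Manila:
  assumes "k \<ge> 2"
  shows "inj_on path_of_word (Manila k n i)"
proof (rule inj_on_inverseI)
  fix w
  assume "w \<in> Manila k n i"
  then show "decode k [] (path_of_word w) = w"
    using decode_path_of_word[of k n i w "[]" "[]"] assms by (simp add: Manila_def)
qed

definition souths :: "step list \<Rightarrow> nat" where
  "souths q = length (filter (\<lambda>s. s = South) q)"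

definition wests :: "step list \<Rightarrow> nat" where
  "wests q = length (filter (\<lambda>s. s = West) q)"

(* For a path starting on the line (k-1)y = x, the value x - (k-1)y at the end of q. *)
definition height :: "nat \<Rightarrow> step list \<Rightarrow> int" where
  "height k q = int (k - 1) * int (souths q) - int (wests q)"

definition dyck_path :: "nat \<Rightarrow> step list \<Rightarrow> bool" where
  "dyck_path k q \<longleftrightarrow> (\<forall>m \<le> length q. 0 \<le> height k (take m q)) \<and> height k q = 0"

definition touches :: "nat \<Rightarrow> step list \<Rightarrow> nat set" where
  "touches k q = {m. 0 < m \<and> m < length q \<and> height k (take m q) = 0}"

definition primitive :: "nat \<Rightarrow> step list \<Rightarrow> bool" where
  "primitive k q \<longleftrightarrow> dyck_path k q \<and> q \<noteq> [] \<and> touches k q = {}"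

lemma souths_simps [simp]:
  "souths [] = 0" "souths (South # q) = Suc (souths q)" "souths (West # q) = souths q"
  "souths (u @ v) = souths u + souths v"
  by (simp_all add: souths_def)

lemma wests_simps [simp]:
  "wests [] = 0" "wests (South # q) = wests q" "wests (West # q) = Suc (wests q)"
  "wests (u @ v) = wests u + wests v"
  by (simp_all add: wests_def)

lemma height_simps [simp]:
  "height k [] = 0" "height k (South # q) = int (k - 1) + height k q"
  "height k (West # q) = height k q - 1" "height k (u @ v) = height k u + height k v"
  by (simp_all add: height_def algebra_simps)

lemma souths_plus_wests: "souths q + wests q = length q"
proof (induction q)
  case (Cons s q)
  then show ?case by (cases s) simp_all
qed simp

lemma finite_touches [simp]: "finite (touches k q)"
  by (rule finite_subset[of _ "{..<length q}"]) (auto simp: touches_def)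

lemma souths_take_le: "souths (take m p) \<le> souths p"
  and wests_take_le: "wests (take m p) \<le> wests p"
  using souths_simps(4)[of "take m p" "drop m p"] wests_simps(4)[of "take m p" "drop m p"] by simp_all

lemma pos_eq: "pos k n q = (int (k - 1) * int n - int (wests q), int n - int (souths q))"
  unfolding pos_def wests_def souths_def of_nat_mult ..

lemma pos_eq_origin_iff: "pos k n p = (0, 0) \<longleftrightarrow> wests p = (k - 1) * n \<and> souths p = n"
proof -
  have "int (k - 1) * int n = int (wests p) \<longleftrightarrow> wests p = (k - 1) * n"
    by (metis of_nat_eq_iff of_nat_mult)
  then show ?thesis
    by (auto simp: pos_eq)
qed

lemma pos_on_diagonal_iff: "(let (x, y) = pos k n q in int (k - 1) * y = x) \<longleftrightarrow> height k q = 0"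
  by (auto simp: pos_eq height_def algebra_simps)

lemma pos_take_in_region_iff:
  assumes "wests p = (k - 1) * n" "souths p = n"
  shows "(let (x, y) = pos k n (take m p) in 0 \<le> x \<and> 0 \<le> y \<and> int (k - 1) * y \<le> x)
           \<longleftrightarrow> 0 \<le> height k (take m p)"
proof -
  have "int (wests (take m p)) \<le> int (k - 1) * int n" "int (souths (take m p)) \<le> int n"
    using assms wests_take_le[of m p] souths_take_le[of m p] by (simp_all flip: of_nat_mult)
  then show ?thesis
    by (auto simp: pos_eq height_def algebra_simps intro: mult_left_mono)
qed

lemma card_diagonal_points:
  "card {pos k n (take m p) | m. 0 < m \<and> m < length p \<and>
           (let (x, y) = pos k n (take m p) in int (k - 1) * y = x)}
     = card (touches k p)"
proof -
  have "inj_on (\<lambda>m. pos k n (take m p)) (touches k p)"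
  proof (rule inj_onI)
    fix m m'
    assume "m \<in> touches k p" "m' \<in> touches k p" "pos k n (take m p) = pos k n (take m' p)"
    then have "souths (take m p) + wests (take m p) = souths (take m' p) + wests (take m' p)"
      by (simp add: pos_eq)
    with \<open>m \<in> touches k p\<close> \<open>m' \<in> touches k p\<close> show "m = m'"
      by (simp add: souths_plus_wests touches_def)
  qed
  moreover have "{pos k n (take m p) | m. 0 < m \<and> m < length p \<and>
                   (let (x, y) = pos k n (take m p) in int (k - 1) * y = x)}
      = (\<lambda>m. pos k n (take m p)) ` touches k p"
    unfolding pos_on_diagonal_iff touches_def by blast
  ultimately show ?thesis
    by (simp add: card_image)
qed

lemma dyck_path_wests:
  assumes "dyck_path k p"
  shows "wests p = (k - 1) * souths p"
proof -
  have "int (wests p) = int (k - 1) * int (souths p)"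
    using assms by (simp add: dyck_path_def height_def)
  then show ?thesis
    by (metis of_nat_eq_iff of_nat_mult)
qed

lemma Paths_eq: "Paths k n i = {p. dyck_path k p \<and> souths p = n \<and> card (touches k p) = i}"
proof (rule set_eqI)
  fix p
  show "p \<in> Paths k n i \<longleftrightarrow> p \<in> {p. dyck_path k p \<and> souths p = n \<and> card (touches k p) = i}"
  proof (cases "wests p = (k - 1) * n \<and> souths p = n")
    case True
    then have ends: "wests p = (k - 1) * n" "souths p = n"
      by simp_all
    show ?thesis
      using ends
      unfolding Paths_def mem_Collect_eq pos_eq_origin_iff pos_take_in_region_iff[OF ends]
        card_diagonal_points
      by (auto simp: dyck_path_def height_def)
  next
    case False
    then show ?thesis
      using dyck_path_wests by (auto simp: Paths_def pos_eq_origin_iff)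
  qed
qed

lemma dyck_path_append:
  assumes "dyck_path k a" "dyck_path k b"
  shows "dyck_path k (a @ b)"
  unfolding dyck_path_def
proof (intro conjI allI impI)
  fix m
  assume m: "m \<le> length (a @ b)"
  show "0 \<le> height k (take m (a @ b))"
  proof (cases "m \<le> length a")
    case True
    then have "0 \<le> height k (take m a)"
      using assms(1) by (simp add: dyck_path_def)
    with True show ?thesis
      by simp
  next
    case False
    then have "0 \<le> height k (take (m - length a) b)"
      using assms(2) m by (simp add: dyck_path_def)
    with False assms(1) show ?thesis
      by (simp add: dyck_path_def)
  qed
qed (use assms in \<open>simp add: dyck_path_def\<close>)

lemma dyck_path_appendD:
  assumes "dyck_path k (a @ b)" "height k a = 0"
  shows "dyck_path k a" "dyck_path k b"
proof -
  have prefix: "0 \<le> height k (take m (a @ b))" if "m \<le> length a + length b" for m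
    using assms(1) that by (simp add: dyck_path_def)
  show "dyck_path k a"
    unfolding dyck_path_def
  proof (intro conjI allI impI)
    fix m
    assume "m \<le> length a"
    then show "0 \<le> height k (take m a)"
      using prefix[of m] by simp
  qed (rule assms(2))
  show "dyck_path k b"
    unfolding dyck_path_def
  proof (intro conjI allI impI)
    fix m
    assume "m \<le> length b"
    then show "0 \<le> height k (take m b)"
      using prefix[of "length a + m"] assms(2) by simp
  qed (use assms in \<open>simp add: dyck_path_def\<close>)
qed

lemma touches_append:
  assumes "height k a = 0" "a \<noteq> []" "b \<noteq> []"
  shows "touches k (a @ b) = touches k a \<union> insert (length a) ((+) (length a) ` touches k b)"
proof (rule set_eqI)
  fix m
  consider "m < length a" | "m = length a" | r where "m = length a + r" "0 < r"
    by (metis less_imp_add_positive nat_neq_iff)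
  then show "m \<in> touches k (a @ b) \<longleftrightarrow>
      m \<in> touches k a \<union> insert (length a) ((+) (length a) ` touches k b)"
    by cases (use assms in \<open>auto simp: touches_def\<close>)
qed

lemma card_touches_append:
  assumes "primitive k a" "b \<noteq> []"
  shows "card (touches k (a @ b)) = Suc (card (touches k b))"
proof -
  have "card ((+) (length a) ` touches k b) = card (touches k b)"
    by (rule card_image) simp
  moreover have "length a \<notin> (+) (length a) ` touches k b"
    by (auto simp: touches_def)
  ultimately show ?thesis
    using assms touches_append[of k a b] by (simp add: primitive_def dyck_path_def)
qed

lemma dyck_path_first_return:
  assumes "dyck_path k p" "touches k p \<noteq> {}"
  obtains a b where "p = a @ b" "primitive k a" "dyck_path k b" "b \<noteq> []"
proof -
  define a where "a = take (Min (touches k p)) p"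
  define b where "b = drop (Min (touches k p)) p"
  have "Min (touches k p) \<in> touches k p"
    using assms(2) by simp
  then have lena: "length a = Min (touches k p)" and ha: "height k a = 0"
    and ne: "a \<noteq> []" "b \<noteq> []"
    by (auto simp: a_def b_def touches_def)
  have p: "p = a @ b"
    by (simp add: a_def b_def)
  have "touches k a \<subseteq> touches k p"
    using touches_append[OF ha ne] p by blast
  moreover have "m \<notin> touches k p" if "m < length a" for m
    using that lena Min_le[OF finite_touches, of m k p] by linarith
  ultimately have "touches k a = {}"
    by (force simp: touches_def)
  moreover have "dyck_path k a" "dyck_path k b"
    using dyck_path_appendD[OF _ ha] assms(1) p by simp_all
  ultimately show ?thesis
    using that p ne by (simp add: primitive_def)
qed

lemma dyck_path_concat_primitive:
  assumes "\<forall>a\<in>set ps. primitive k a" "ps \<noteq> []"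
  shows "dyck_path k (concat ps)" "concat ps \<noteq> []" "card (touches k (concat ps)) = length ps - 1"
proof -
  have "dyck_path k (concat ps) \<and> concat ps \<noteq> [] \<and> card (touches k (concat ps)) = length ps - 1"
    using assms
  proof (induction ps)
    case (Cons a ps)
    show ?case
    proof (cases "ps = []")
      case False
      then show ?thesis
        using Cons card_touches_append[of k a "concat ps"] dyck_path_append[of k a "concat ps"]
        by (simp add: primitive_def)
    qed (use Cons in \<open>simp add: primitive_def\<close>)
  qed simp
  then show "dyck_path k (concat ps)" "concat ps \<noteq> []" "card (touches k (concat ps)) = length ps - 1"
    by simp_all
qed

definition join_west :: "step list list \<Rightarrow> step list" where
  "join_west Ds = concat (map (\<lambda>D. D @ [West]) Ds)"

definition first_passage :: "nat \<Rightarrow> nat \<Rightarrow> step list \<Rightarrow> bool" where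
  "first_passage k c q \<longleftrightarrow>
     (\<forall>m < length q. 0 < int c + height k (take m q)) \<and> int c + height k q = 0"

lemma join_west_simps [simp]:
  "join_west [] = []" "join_west (D # Ds) = D @ West # join_west Ds"
  by (simp_all add: join_west_def)

lemma first_passage_Suc:
  assumes "dyck_path k D" "first_passage k c q"
  shows "first_passage k (Suc c) (D @ West # q)"
  unfolding first_passage_def
proof (intro conjI allI impI)
  fix m
  assume m: "m < length (D @ West # q)"
  show "0 < int (Suc c) + height k (take m (D @ West # q))"
  proof (cases "m \<le> length D")
    case True
    then have "0 \<le> height k (take m D)"
      using assms(1) by (simp add: dyck_path_def)
    with True show ?thesis
      by simp
  next
    case False
    define r where "r = m - Suc (length D)"
    have "m = Suc (length D + r)" "r < length q"
      using m False by (auto simp: r_def)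
    then show ?thesis
      using assms by (simp add: dyck_path_def first_passage_def)
  qed
qed (use assms in \<open>simp add: dyck_path_def first_passage_def\<close>)

lemma first_passage_SucE:
  assumes "first_passage k (Suc c) q"
  obtains D q' where "q = D @ West # q'" "dyck_path k D" "first_passage k c q'"
proof -
  define m0 where "m0 = (LEAST m. height k (take m q) < 0)"
  have final: "height k (take (length q) q) < 0"
    using assms by (simp add: first_passage_def)
  then have neg: "height k (take m0 q) < 0"
    unfolding m0_def by (rule LeastI)
  have before: "0 \<le> height k (take m q)" if "m < m0" for m
    using not_less_Least[OF that[unfolded m0_def]] by (simp add: m0_def)
  have "m0 \<noteq> 0"
    using neg by (cases m0) auto
  moreover have "m0 \<le> length q"
    unfolding m0_def using final by (rule Least_le)
  ultimately obtain p where p: "m0 = Suc p" "p < length q"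
    by (cases m0) auto
  define D where "D = take p q"
  define q' where "q' = drop (Suc p) q"
  have q: "q = D @ q ! p # q'" and lenD: "length D = p"
    using p(2) id_take_nth_drop[of p q] by (simp_all add: D_def q'_def)
  have "0 \<le> height k D"
    using before[of p] p by (simp add: D_def)
  moreover have "height k (D @ [q ! p]) < 0"
    using neg p by (simp add: D_def take_Suc_conv_app_nth)
  ultimately have West: "q ! p = West" and hD: "height k D = 0"
    by (cases "q ! p"; simp)+
  have "dyck_path k D"
    unfolding dyck_path_def
  proof (intro conjI allI impI hD)
    fix m
    assume "m \<le> length D"
    then show "0 \<le> height k (take m D)"
      using before[of m] p lenD by (simp add: D_def)
  qed
  moreover have "first_passage k c q'"
    unfolding first_passage_def
  proof (intro conjI allI impI)
    fix m
    assume "m < length q'"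
    then have "Suc p + m < length q"
      using q lenD by (simp add: q'_def)
    then have "0 < int (Suc c) + height k (take (Suc p + m) q)"
      using assms by (simp add: first_passage_def)
    then show "0 < int c + height k (take m q')"
      using q lenD hD West by simp
  qed (use assms q hD West in \<open>simp add: first_passage_def\<close>)
  moreover have "q = D @ West # q'"
    using q West by simp
  ultimately show ?thesis
    using that by blast
qed

lemma first_passage_iff_join_west:
  "first_passage k c q \<longleftrightarrow> (\<exists>Ds. length Ds = c \<and> (\<forall>D\<in>set Ds. dyck_path k D) \<and> q = join_west Ds)"
  (is "?passage \<longleftrightarrow> ?factors")
proof
  show "?passage \<Longrightarrow> ?factors"
  proof (induction c arbitrary: q)
    case 0
    then have "q = []"
      by (cases q) (auto simp: first_passage_def)
    then show ?case
      by simp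
  next
    case (Suc c)
    obtain D q' where "q = D @ West # q'" "dyck_path k D" "first_passage k c q'"
      using first_passage_SucE[OF Suc.prems] .
    with Suc.IH show ?case
      by (metis join_west_simps(2) length_Cons set_ConsD)
  qed
next
  assume ?factors
  then obtain Ds where "length Ds = c" "\<forall>D\<in>set Ds. dyck_path k D" "q = join_west Ds"
    by blast
  then show ?passage
  proof (induction Ds arbitrary: c q)
    case Nil
    then show ?case
      by (simp add: first_passage_def)
  next
    case (Cons D Ds)
    then show ?case
      using first_passage_Suc by auto
  qed
qed

lemma primitive_iff_first_passage:
  "primitive k p \<longleftrightarrow> (\<exists>q. p = South # q \<and> first_passage k (k - 1) q)"
proof
  assume prim: "primitive k p"
  then obtain s q where p: "p = s # q"
    by (cases p) (auto simp: primitive_def)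
  have dyck: "0 \<le> height k (take m p)" if "m \<le> length p" for m
    using prim that by (simp add: primitive_def dyck_path_def)
  from dyck[of 1] have South: "s = South"
    using p by (cases s) auto
  have "0 < int (k - 1) + height k (take m q)" if m: "m < length q" for m
  proof -
    have "Suc m \<notin> touches k p"
      using prim by (simp add: primitive_def)
    then have "height k (take (Suc m) p) \<noteq> 0"
      using m p by (simp add: touches_def)
    moreover have "0 \<le> height k (take (Suc m) p)"
      using dyck[of "Suc m"] m p by simp
    ultimately show ?thesis
      using p South by simp
  qed
  moreover have "int (k - 1) + height k q = 0"
    using prim p South by (simp add: primitive_def dyck_path_def)
  ultimately show "\<exists>q. p = South # q \<and> first_passage k (k - 1) q"
    using p South by (auto simp: first_passage_def)
next
  assume "\<exists>q. p = South # q \<and> first_passage k (k - 1) q"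
  then obtain q where p: "p = South # q" and desc: "first_passage k (k - 1) q"
    by blast
  have pos: "0 < height k (take (Suc m) p)" if "m < length q" for m
    using desc that p by (simp add: first_passage_def)
  have "0 \<le> height k (take m p)" if "m \<le> length p" for m
  proof (cases m)
    case (Suc m')
    show ?thesis
    proof (cases "m' < length q")
      case True
      then show ?thesis
        using pos Suc by fastforce
    next
      case False
      then show ?thesis
        using desc p Suc by (simp add: first_passage_def)
    qed
  qed simp
  moreover have "touches k p = {}"
    using pos p by (fastforce simp: touches_def gr0_conv_Suc)
  ultimately show "primitive k p"
    using desc p by (simp add: primitive_def dyck_path_def first_passage_def)
qed

lemma primitive_iff_join_west:
  "primitive k p \<longleftrightarrow>
     (\<exists>Ds. length Ds = k - 1 \<and> (\<forall>D\<in>set Ds. dyck_path k D) \<and> p = South # join_west Ds)"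
  unfolding primitive_iff_first_passage first_passage_iff_join_west by blast

lemma path_of_word_comma_join:
  "Ms \<noteq> [] \<Longrightarrow> path_of_word (comma_join Ms) @ [West] = join_west (map path_of_word Ms)"
  by (induction Ms rule: comma_join.induct) simp_all

lemma path_of_word_tuple_word:
  "Ms \<noteq> [] \<Longrightarrow> path_of_word (tuple_word Ms) = South # join_west (map path_of_word Ms)"
  using path_of_word_comma_join[of Ms] by (simp add: tuple_word_def)

lemma souths_join_west: "souths (join_west Ds) = sum_list (map souths Ds)"
  by (induction Ds) simp_all

lemma souths_concat: "souths (concat Ds) = sum_list (map souths Ds)"
  by (induction Ds) simp_all

lemma length_less_join_west: "D \<in> set Ds \<Longrightarrow> length D < length (join_west Ds)"
  by (induction Ds) auto

lemma path_of_word_manila: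
  assumes "manila k n i w" "k \<ge> 2"
  shows "dyck_path k (path_of_word w) \<and> souths (path_of_word w) = n \<and>
         (if w = [] then i = -1 else i = int (card (touches k (path_of_word w))))"
  using assms
proof (induction rule: manila.induct)
  case M1
  then show ?case
    by (simp add: dyck_path_def)
next
  case (M2 n Ms ns "is")
  define Ds where "Ds = map path_of_word Ms"
  have Ms: "Ms \<noteq> []"
    using M2 by auto
  have "\<forall>D\<in>set Ds. dyck_path k D"
    using M2 by (auto simp: Ds_def in_set_conv_nth)
  then have "primitive k (path_of_word (tuple_word Ms))"
    unfolding primitive_iff_join_west path_of_word_tuple_word[OF Ms]
    using M2 by (intro exI[of _ Ds]) (simp add: Ds_def)
  moreover have "map souths Ds = ns"
    using M2 by (intro nth_equalityI) (simp_all add: Ds_def)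
  then have "souths (path_of_word (tuple_word Ms)) = n"
    using M2 by (simp add: path_of_word_tuple_word[OF Ms] souths_join_west Ds_def)
  ultimately show ?case
    by (simp add: primitive_def tuple_word_def)
next
  case (M3 l Ms ns n)
  have "primitive k (path_of_word (Ms ! j)) \<and> souths (path_of_word (Ms ! j)) = ns ! j"
    if "j < l" for j
    using M3 that by (auto simp: primitive_def split: if_splits)
  then have "\<forall>a\<in>set (map path_of_word Ms). primitive k a"
    using M3 by (auto simp: in_set_conv_nth)
  moreover have "map path_of_word Ms \<noteq> []"
    using M3 by auto
  moreover have "map (souths \<circ> path_of_word) Ms = ns"
    using M3 by (intro nth_equalityI) simp_all
  ultimately show ?case
    using M3 dyck_path_concat_primitive[of "map path_of_word Ms" k]
    by (auto simp: souths_concat of_nat_diff)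
qed

lemma manila_append:
  assumes "manila k n 0 u" "manila k m j w" "0 \<le> j"
  shows "manila k (n + m) (j + 1) (u @ w)"
  using assms(2)
proof (cases rule: manila.cases)
  case M1
  then show ?thesis
    using assms(3) by simp
next
  case M2
  have "manila k (sum_list [n, m]) (int 2 - 1) (concat [u, w])"
    by (rule manila.M3[where Ms = "[u, w]" and ns = "[n, m]"])
      (use assms(1,2) M2 in \<open>auto simp: less_2_cases_iff\<close>)
  then show ?thesis
    using M2 by simp
next
  case (M3 l Ms ns)
  have "manila k (sum_list (n # ns)) (int (Suc l) - 1) (concat (u # Ms))"
    by (rule manila.M3[where Ms = "u # Ms" and ns = "n # ns"])
      (use assms(1) M3 in \<open>auto simp: nth_Cons'\<close>)
  then show ?thesis
    using M3 by simp
qed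

lemma manila_of_dyck_path:
  assumes "k \<ge> 2" "dyck_path k p" "p \<noteq> []"
  shows "\<exists>w. manila k (souths p) (int (card (touches k p))) w \<and> path_of_word w = p"
  using assms(2,3)
proof (induction "length p" arbitrary: p rule: less_induct)
  case less
  show ?case
  proof (cases "touches k p = {}")
    case True
    then obtain Ds where Ds: "length Ds = k - 1" "\<forall>D\<in>set Ds. dyck_path k D" "p = South # join_west Ds"
      using less.prems primitive_iff_join_west[of k p] by (auto simp: primitive_def)
    have "\<exists>w i. manila k (souths D) i w \<and> path_of_word w = D" if "D \<in> set Ds" for D
    proof (cases "D = []")
      case True
      then show ?thesis
        using manila.M1 by fastforce
    next
      case False
      then show ?thesis
        using less.hyps[of D] Ds that length_less_join_west[OF that] by auto
    qed
    then obtain W I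
      where WI: "\<And>D. D \<in> set Ds \<Longrightarrow> manila k (souths D) (I D) (W D) \<and> path_of_word (W D) = D"
      by metis
    have "manila k (souths p) 0 (tuple_word (map W Ds))"
      by (rule manila.M2[where ns = "map souths Ds" and ?is = "map I Ds"])
        (use Ds WI in \<open>simp_all add: souths_join_west\<close>)
    moreover have "map W Ds \<noteq> []"
      using Ds assms(1) by auto
    then have "path_of_word (tuple_word (map W Ds)) = p"
      using Ds WI by (simp add: path_of_word_tuple_word map_idI)
    ultimately show ?thesis
      using True by auto
  next
    case False
    then obtain a b where ab: "p = a @ b" "primitive k a" "dyck_path k b" "b \<noteq> []"
      using less.prems dyck_path_first_return by blast
    obtain u where u: "manila k (souths a) 0 u" "path_of_word u = a"
      using less.hyps[of a] ab by (auto simp: primitive_def)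
    obtain w where w: "manila k (souths b) (int (card (touches k b))) w" "path_of_word w = b"
      using less.hyps[of b] ab by (auto simp: primitive_def)
    have "manila k (souths a + souths b) (int (card (touches k b)) + 1) (u @ w)"
      using manila_append[OF u(1) w(1)] by simp
    moreover have "card (touches k p) = Suc (card (touches k b))"
      using card_touches_append[OF ab(2,4)] ab(1) by simp
    ultimately show ?thesis
      using ab u w by (intro exI[of _ "u @ w"]) (simp add: add.commute)
  qed
qed

lemma path_of_word_image_Manila:
  assumes "k \<ge> 2" "n \<ge> 1"
  shows "path_of_word ` Manila k n (int i) = {p. dyck_path k p \<and> souths p = n \<and> card (touches k p) = i}"
proof (intro set_eqI iffI)
  fix p
  assume "p \<in> path_of_word ` Manila k n (int i)"
  then obtain w where "manila k n (int i) w" "p = path_of_word w"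
    by (auto simp: Manila_def)
  then show "p \<in> {p. dyck_path k p \<and> souths p = n \<and> card (touches k p) = i}"
    using path_of_word_manila[of k n "int i" w] assms(1) by (auto split: if_splits)
next
  fix p
  assume "p \<in> {p. dyck_path k p \<and> souths p = n \<and> card (touches k p) = i}"
  moreover from this have "p \<noteq> []"
    using assms(2) by auto
  ultimately show "p \<in> path_of_word ` Manila k n (int i)"
    using manila_of_dyck_path[OF assms(1), of p] by (auto simp: Manila_def)
qed

theorem lemma5p5:
  fixes k n i :: nat
  assumes "k \<ge> 2" and "n \<ge> 1"
  shows "card (Manila k n (int i)) = card (Paths k n i)"
proof -
  have "card (Manila k n (int i)) = card (path_of_word ` Manila k n (int i))"
    using inj_on_path_of_word_Manila[OF assms(1)] by (rule card_image[symmetric])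
  also have "\<dots> = card (Paths k n i)"
    using path_of_word_image_Manila[OF assms] by (simp add: Paths_eq)
  finally show ?thesis .
qed

end
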